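(* Let $G_0$ and $G_1$ be continuous cumulative distribution functions on $\mathbb{R}$ with densities, and for $\epsilon\in(0,1)$ consider the hypotheses $H_0: X_i\overset{\text{i.i.d.}}{\sim}G_0$ versus $H_1: X_i\overset{\text{i.i.d.}}{\sim}\epsilon G_1+(1-\epsilon)G_0$. Let $F_0=G_0$, $F_1=(1-\epsilon)G_0+\epsilon G_1$, $\bar F_j=1-F_j$, and $D_\epsilon(x)=\bar F_1(\bar F_0^{-1}(x))$ for $x\in[0,1]$. For $\tau_1\in(0,1]$, $\tau_2>0$ define \[ E_0=\tau_1(1-\log\tau_1+\log\tau_2),\qquad V_0=\tau_1\bigl(1+(1-\tau_1)(1-\log\tau_1+\log\tau_2)^2\bigr), \] \[ E_1=\int_0^{\tau_1}-\log\!\Big(\frac{u}{\tau_2}\Big)D_\epsilon'(u)\,du,\qquad c_\epsilon(\tau_1,\tau_2)=\frac{(E_1-E_0)^2}{V_0}. \] Then the maximizers $(\tau_1^*,\tau_2^* )$ of $c_\epsilon$ over $(0,1]\times(0,\infty)$ do not depend on $\epsilon$: for any $\epsilon,\epsilon'\in(0,1)$, the set of maximizers of $c_\epsilon$ equals the set of maximizers of $c_{\epsilon'}$.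
   Context: Input $p$-values are $P_i=\bar F_0(X_i)$, and the TFisher statistic is $W_n(\tau_1,\tau_2)=\sum_{i=1}^n\bigl(-2\log P_i+2\log\tau_2\bigr)I(P_i\le\tau_1)$; $c_\epsilon(\tau_1,\tau_2)$ is its Bahadur efficiency under the stated mixture alternative (with the parameters of $G_1$ held fixed). *)

theory Defs
  imports "HOL-Analysis.Analysis"
begin

definition cdf_with_density :: "(real \<Rightarrow> real) \<Rightarrow> bool" where
  "cdf_with_density G \<longleftrightarrow> continuous_on UNIV G \<and>
     (\<exists>g. g \<in> borel_measurable borel \<and> (\<forall>x. 0 \<le> g x) \<and> integrable lborel g \<and>
          integral\<^sup>L lborel g = 1 \<and> (\<forall>x. G x = (\<integral>t\<in>{..x}. g t \<partial>lborel)))"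

definition Fbar0 :: "(real \<Rightarrow> real) \<Rightarrow> real \<Rightarrow> real" where
  "Fbar0 G0 t = 1 - G0 t"

definition Fbar1 :: "real \<Rightarrow> (real \<Rightarrow> real) \<Rightarrow> (real \<Rightarrow> real) \<Rightarrow> real \<Rightarrow> real" where
  "Fbar1 eps G0 G1 t = 1 - ((1 - eps) * G0 t + eps * G1 t)"

definition Fbar0_inv :: "(real \<Rightarrow> real) \<Rightarrow> real \<Rightarrow> real" where
  "Fbar0_inv G0 x = Inf {t. Fbar0 G0 t \<le> x}"

definition Dfun :: "real \<Rightarrow> (real \<Rightarrow> real) \<Rightarrow> (real \<Rightarrow> real) \<Rightarrow> real \<Rightarrow> real" where
  "Dfun eps G0 G1 x = Fbar1 eps G0 G1 (Fbar0_inv G0 x)"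

definition E0 :: "real \<Rightarrow> real \<Rightarrow> real" where
  "E0 t1 t2 = t1 * (1 - ln t1 + ln t2)"

definition V0 :: "real \<Rightarrow> real \<Rightarrow> real" where
  "V0 t1 t2 = t1 * (1 + (1 - t1) * (1 - ln t1 + ln t2)\<^sup>2)"

definition E1 :: "real \<Rightarrow> (real \<Rightarrow> real) \<Rightarrow> (real \<Rightarrow> real) \<Rightarrow> real \<Rightarrow> real \<Rightarrow> real" where
  "E1 eps G0 G1 t1 t2 = integral {0..t1} (\<lambda>u. - ln (u / t2) * deriv (Dfun eps G0 G1) u)"

definition c_eff :: "real \<Rightarrow> (real \<Rightarrow> real) \<Rightarrow> (real \<Rightarrow> real) \<Rightarrow> real \<Rightarrow> real \<Rightarrow> real" where
  "c_eff eps G0 G1 t1 t2 = (E1 eps G0 G1 t1 t2 - E0 t1 t2)\<^sup>2 / V0 t1 t2"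

definition maximizers :: "real \<Rightarrow> (real \<Rightarrow> real) \<Rightarrow> (real \<Rightarrow> real) \<Rightarrow> (real \<times> real) set" where
  "maximizers eps G0 G1 = {(t1, t2). t1 \<in> {0<..1} \<and> 0 < t2 \<and>
      (\<forall>s1 s2. s1 \<in> {0<..1} \<and> 0 < s2 \<longrightarrow> c_eff eps G0 G1 s1 s2 \<le> c_eff eps G0 G1 t1 t2)}"

end

theory Submission
  imports Defs "HOL-Real_Asymp.Real_Asymp"
begin

text \<open>Because \<open>G0\<close> is continuous, \<open>G0 (Fbar0_inv G0 x) = 1 - x\<close> on \<open>(0, 1)\<close>, so there
  \<open>Dfun \<epsilon> G0 G1 x = (1 - \<epsilon>) x + \<epsilon> D_alt G0 G1 x\<close>, where \<open>D_alt\<close> is the \<open>D\<close> of the pure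
  alternative \<open>G1\<close>. As \<open>\<integral>\<^sub>0\<^sup>\<tau>\<^sup>1 -ln (u / \<tau>\<^sub>2) du = E0 \<tau>\<^sub>1 \<tau>\<^sub>2\<close>, this gives
  \<open>E1 - E0 = \<epsilon> (\<integral>\<^sub>0\<^sup>\<tau>\<^sup>1 -ln (u / \<tau>\<^sub>2) D_alt' u du - E0)\<close>: \<open>c_eff \<epsilon>\<close> is \<open>\<epsilon>\<^sup>2\<close> times a function
  of \<open>(\<tau>\<^sub>1, \<tau>\<^sub>2)\<close> alone, so its maximisers do not depend on \<open>\<epsilon>\<close>.

  HOL's junk values (\<open>deriv\<close> is an unspecified constant where no derivative exists, and the
  integral of a non-integrable function is 0) make this argument depend on \<open>D_alt'\<close> existing
  almost everywhere and being locally integrable. Both hold because \<open>D_alt\<close> is monotone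
  (Lebesgue's theorem, derived from the Vitali covering theorem via Dini derivates). Moreover,
  integrability of \<open>-ln (u / \<tau>\<^sub>2) D_alt' u\<close> on \<open>[0, \<tau>\<^sub>1]\<close> does not depend on \<open>(\<tau>\<^sub>1, \<tau>\<^sub>2)\<close>; when it
  fails, \<open>c_eff \<epsilon> = E0\<^sup>2 / V0\<close> for every \<open>\<epsilon>\<close>.\<close>

section \<open>Lebesgue's theorem: monotone functions are differentiable almost everywhere\<close>

text \<open>Closed intervals are encoded as (centre, radius) pairs, the form in which
  Vitali_covering_theorem_cballs produces them.\<close>

definition ival :: "real \<times> real \<Rightarrow> real set" where
  "ival i = cball (fst i) (snd i)"

definition increment :: "(real \<Rightarrow> real) \<Rightarrow> real \<times> real \<Rightarrow> real" where
  "increment f i = f (fst i + snd i) - f (fst i - snd i)"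

abbreviation disjoint_ivals :: "(real \<times> real) set \<Rightarrow> bool" where
  "disjoint_ivals C \<equiv> pairwise (\<lambda>i j. disjnt (ival i) (ival j)) C"

lemma ival_eq_atLeastAtMost: "ival i = {fst i - snd i .. fst i + snd i}"
  by (simp add: ival_def cball_eq_atLeastAtMost)

lemma ival_lmeasurable [simp]: "ival i \<in> lmeasurable"
  by (simp add: ival_def)

lemma ival_sets [simp]: "ival i \<in> sets lebesgue"
  by (simp add: ival_def)

lemma measure_ival: "0 < snd i \<Longrightarrow> measure lebesgue (ival i) = 2 * snd i"
  by (simp add: ival_eq_atLeastAtMost)

lemma measure_Union_ivals:
  assumes "finite F" "\<forall>i\<in>F. 0 < snd i" "disjoint_ivals F"
  shows "measure lebesgue (\<Union>(ival ` F)) = (\<Sum>i\<in>F. 2 * snd i)"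
proof -
  have "measure lebesgue (\<Union>(ival ` F)) = (\<Sum>i\<in>F. measure lebesgue (ival i))"
    by (rule measure_negligible_finite_Union_image)
       (use assms in \<open>auto simp: pairwise_def disjnt_def\<close>)
  also have "\<dots> = (\<Sum>i\<in>F. 2 * snd i)"
    using assms(2) by (intro sum.cong) (auto simp: measure_ival)
  finally show ?thesis .
qed

lemma lmeasurable_Union_ivals:
  assumes "countable C" "U \<in> lmeasurable" "\<forall>i\<in>C. ival i \<subseteq> U"
  shows "\<Union>(ival ` C) \<in> lmeasurable"
proof (rule fmeasurableI2[OF assms(2)])
  show "\<Union>(ival ` C) \<subseteq> U" using assms by auto
  show "\<Union>(ival ` C) \<in> sets lebesgue"
    using assms(1) by (intro sets.countable_UN') auto
qed

lemma sum_increment_le: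
  fixes f :: "real \<Rightarrow> real"
  assumes f: "mono f" and "finite S" "\<forall>i\<in>S. 0 < snd i" "disjoint_ivals S"
    and "\<forall>i\<in>S. ival i \<subseteq> {A..B}" "A \<le> B"
  shows "(\<Sum>i\<in>S. increment f i) \<le> f B - f A"
  using assms(2-6)
proof (induction S arbitrary: B rule: finite_ranking_induct[where f = "\<lambda>i. fst i - snd i"])
  case empty
  then show ?case using f by (simp add: mono_def)
next
  case (insert x S)
  show ?case
  proof (cases "x \<in> S")
    case True
    then show ?thesis using insert by (simp add: insert_absorb)
  next
    case False
    have x: "A \<le> fst x - snd x" "fst x + snd x \<le> B" "0 < snd x"
      using insert.prems by (auto simp: ival_eq_atLeastAtMost)
    have "ival i \<subseteq> {A..fst x - snd x}" if i: "i \<in> S" for i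
    proof -
      have "disjnt (ival i) (ival x)" "0 < snd i"
        using insert.prems i False by (auto simp: pairwise_def)
      with insert.hyps(2)[OF i] x(3) have "fst i + snd i < fst x - snd x"
        by (auto simp: disjnt_def ival_eq_atLeastAtMost)
      then show ?thesis using insert.prems i by (auto simp: ival_eq_atLeastAtMost)
    qed
    then have "(\<Sum>i\<in>S. increment f i) \<le> f (fst x - snd x) - f A"
      using insert.IH insert.prems x by (auto simp: pairwise_insert)
    moreover have "f (fst x + snd x) \<le> f B" using f x by (simp add: mono_def)
    ultimately show ?thesis using False insert.hyps(1) by (simp add: increment_def)
  qed
qed

lemma sum_increment_le_refinement:
  fixes f :: "real \<Rightarrow> real"
  assumes f: "mono f" and F: "finite F" "\<forall>j\<in>F. 0 < snd j" "disjoint_ivals F"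
    and \<sigma>: "\<forall>j\<in>F. ival j \<subseteq> ival (\<sigma> j)"
  shows "(\<Sum>j\<in>F. increment f j) \<le> (\<Sum>i\<in>\<sigma> ` F. increment f i)"
proof -
  have "(\<Sum>j\<in>F. increment f j) = (\<Sum>i\<in>\<sigma> ` F. \<Sum>j\<in>{j\<in>F. \<sigma> j = i}. increment f j)"
    by (rule sum.image_gen[OF F(1)])
  also have "\<dots> \<le> (\<Sum>i\<in>\<sigma> ` F. increment f i)"
  proof (rule sum_mono)
    fix i assume "i \<in> \<sigma> ` F"
    then obtain j where j: "j \<in> F" "ival j \<subseteq> ival i" using \<sigma> by auto
    then have "fst i - snd i \<le> fst i + snd i"
      using F(2) by (auto simp: ival_eq_atLeastAtMost)
    moreover have "disjoint_ivals {j\<in>F. \<sigma> j = i}"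
      using F(3) by (rule pairwise_subset) auto
    ultimately show "(\<Sum>j\<in>{j\<in>F. \<sigma> j = i}. increment f j) \<le> increment f i"
      using sum_increment_le[OF f, of "{j\<in>F. \<sigma> j = i}" "fst i - snd i" "fst i + snd i"] F \<sigma>
      by (auto simp: increment_def ival_eq_atLeastAtMost[symmetric])
  qed
  finally show ?thesis .
qed

lemma finite_ivals_approx_measure:
  assumes C: "countable C" "\<forall>j\<in>C. 0 < snd j" "disjoint_ivals C"
    and U: "U \<in> lmeasurable" "\<forall>j\<in>C. ival j \<subseteq> U" and e: "0 < e"
  obtains F where "finite F" "F \<subseteq> C" "measure lebesgue (\<Union>(ival ` C)) - e < (\<Sum>j\<in>F. 2 * snd j)"
proof -
  obtain D where D: "D \<subseteq> ival ` C" "finite D" "measure lebesgue (\<Union>(ival ` C)) - e < measure lebesgue (\<Union>D)"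
  proof (rule measure_countable_Union_approachable[of "ival ` C" e "measure lebesgue U"])
    show "measure lebesgue (\<Union>D) \<le> measure lebesgue U" if "D \<subseteq> ival ` C" "finite D" for D
    proof (rule measure_mono_fmeasurable)
      show "\<Union>D \<subseteq> U" using that U by auto
      show "\<Union>D \<in> sets lebesgue" using that by (intro sets.finite_Union) auto
    qed (use U in auto)
  qed (use C e in auto)
  obtain F where F: "F \<subseteq> C" "finite F" "D = ival ` F"
    using finite_subset_image[OF D(2,1)] by blast
  have "disjoint_ivals F" using pairwise_subset[OF C(3) F(1)] .
  then have "measure lebesgue (\<Union>D) = (\<Sum>j\<in>F. 2 * snd j)"
    using measure_Union_ivals[of F] F C(2) by auto
  then show ?thesis using that F D(3) by auto
qed

definition right_derivate_le :: "(real \<Rightarrow> real) \<Rightarrow> real \<Rightarrow> real \<Rightarrow> bool" where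
  "right_derivate_le f x p \<longleftrightarrow> (\<exists>\<^sub>F k in at_right 0. f (x + k) - f x \<le> p * k)"

definition right_derivate_ge :: "(real \<Rightarrow> real) \<Rightarrow> real \<Rightarrow> real \<Rightarrow> bool" where
  "right_derivate_ge f x q \<longleftrightarrow> (\<exists>\<^sub>F k in at_right 0. q * k \<le> f (x + k) - f x)"

definition left_derivate_le :: "(real \<Rightarrow> real) \<Rightarrow> real \<Rightarrow> real \<Rightarrow> bool" where
  "left_derivate_le f x p \<longleftrightarrow> (\<exists>\<^sub>F h in at_right 0. f x - f (x - h) \<le> p * h)"

definition left_derivate_ge :: "(real \<Rightarrow> real) \<Rightarrow> real \<Rightarrow> real \<Rightarrow> bool" where
  "left_derivate_ge f x q \<longleftrightarrow> (\<exists>\<^sub>F h in at_right 0. q * h \<le> f x - f (x - h))"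

lemma frequently_at_right_0_iff:
  "(\<exists>\<^sub>F k in at_right (0::real). P k) \<longleftrightarrow> (\<forall>d>0. \<exists>k. 0 < k \<and> k < d \<and> P k)"
  by (auto simp: frequently_def eventually_at_right_field)

lemma derivate_mono:
  assumes "p \<le> p'"
  shows "right_derivate_le f x p \<Longrightarrow> right_derivate_le f x p'"
    and "left_derivate_le f x p \<Longrightarrow> left_derivate_le f x p'"
    and "right_derivate_ge f x p' \<Longrightarrow> right_derivate_ge f x p"
    and "left_derivate_ge f x p' \<Longrightarrow> left_derivate_ge f x p"
proof -
  have *: "\<forall>\<^sub>F h in at_right 0. p * h \<le> p' * (h::real)"
    using eventually_at_right_less[of 0] by eventually_elim (use assms in \<open>simp add: mult_right_mono\<close>)
  show "right_derivate_le f x p \<Longrightarrow> right_derivate_le f x p'"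
    "left_derivate_le f x p \<Longrightarrow> left_derivate_le f x p'"
    "right_derivate_ge f x p' \<Longrightarrow> right_derivate_ge f x p"
    "left_derivate_ge f x p' \<Longrightarrow> left_derivate_ge f x p"
    unfolding right_derivate_le_def left_derivate_le_def right_derivate_ge_def left_derivate_ge_def
    by (auto elim!: frequently_rev_mp[OF _ eventually_mono[OF *]])
qed

lemma derivate_le_or_ge:
  "right_derivate_le f x m \<or> right_derivate_ge f x m"
  "left_derivate_le f x m \<or> left_derivate_ge f x m"
proof -
  have *: "(\<exists>\<^sub>F k in at_right (0::real). a k \<le> b k) \<or> (\<exists>\<^sub>F k in at_right 0. b k \<le> a k)"
    for a b :: "real \<Rightarrow> real"
  proof -
    have "\<exists>\<^sub>F k in at_right (0::real). a k \<le> b k \<or> b k \<le> a k"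
      by (rule frequently_elim1[where P = "\<lambda>_. True"]) auto
    then show ?thesis by (simp only: frequently_disj_iff)
  qed
  show "right_derivate_le f x m \<or> right_derivate_ge f x m"
    "left_derivate_le f x m \<or> left_derivate_ge f x m"
    unfolding right_derivate_le_def left_derivate_le_def right_derivate_ge_def left_derivate_ge_def
    by (rule *)+
qed

lemma derivate_reflect [simp]:
  "right_derivate_le (\<lambda>y. - f (- y)) (- x) p \<longleftrightarrow> left_derivate_le f x p"
  "right_derivate_ge (\<lambda>y. - f (- y)) (- x) q \<longleftrightarrow> left_derivate_ge f x q"
  "left_derivate_le (\<lambda>y. - f (- y)) (- x) p \<longleftrightarrow> right_derivate_le f x p"
  "left_derivate_ge (\<lambda>y. - f (- y)) (- x) q \<longleftrightarrow> right_derivate_ge f x q"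
  unfolding right_derivate_le_def left_derivate_le_def right_derivate_ge_def left_derivate_ge_def
  by (simp_all add: algebra_simps)

lemma derivate_iff_quotient:
  "right_derivate_le f x p \<longleftrightarrow> (\<exists>\<^sub>F k in at_right 0. (f (x + k) - f x) / k \<le> p)"
  "right_derivate_ge f x q \<longleftrightarrow> (\<exists>\<^sub>F k in at_right 0. q \<le> (f (x + k) - f x) / k)"
  "left_derivate_le f x p \<longleftrightarrow> (\<exists>\<^sub>F k in at_left 0. (f (x + k) - f x) / k \<le> p)"
  "left_derivate_ge f x q \<longleftrightarrow> (\<exists>\<^sub>F k in at_left 0. q \<le> (f (x + k) - f x) / k)"
proof -
  have pos: "\<forall>\<^sub>F k in at_right (0::real). 0 < k" by (rule eventually_at_right_less)
  have left: "(\<exists>\<^sub>F k in at_left 0. P k) \<longleftrightarrow> (\<exists>\<^sub>F k in at_right 0. P (- k))" for P :: "real \<Rightarrow> bool"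
    by (simp add: frequently_def eventually_at_left_to_right)
  have quotient: "(f (x + - k) - f x) / - k = (f x - f (x - k)) / k" for k
    by (simp add: divide_simps)
  show "right_derivate_le f x p \<longleftrightarrow> (\<exists>\<^sub>F k in at_right 0. (f (x + k) - f x) / k \<le> p)"
    "right_derivate_ge f x q \<longleftrightarrow> (\<exists>\<^sub>F k in at_right 0. q \<le> (f (x + k) - f x) / k)"
    "left_derivate_le f x p \<longleftrightarrow> (\<exists>\<^sub>F k in at_left 0. (f (x + k) - f x) / k \<le> p)"
    "left_derivate_ge f x q \<longleftrightarrow> (\<exists>\<^sub>F k in at_left 0. q \<le> (f (x + k) - f x) / k)"
    unfolding right_derivate_le_def left_derivate_le_def right_derivate_ge_def left_derivate_ge_def
      left quotient
    by (auto intro!: frequently_cong[OF pos] simp: pos_divide_le_eq pos_le_divide_eq)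
qed

lemma vitali_cover_right_derivate_ge:
  fixes f :: "real \<Rightarrow> real"
  assumes E: "\<forall>y\<in>E. right_derivate_ge f y q"
  obtains C' where "countable C'" "disjoint_ivals C'"
    "negligible (E \<inter> (\<Union>i\<in>C. ball (fst i) (snd i)) - (\<Union>j\<in>C'. ival j))"
    "\<And>j. j \<in> C' \<Longrightarrow> 0 < snd j \<and> (\<exists>i\<in>C. ival j \<subseteq> ival i) \<and> q * (2 * snd j) \<le> increment f j"
proof -
  define K where "K = {j. 0 < snd j \<and> (\<exists>i\<in>C. ival j \<subseteq> ival i) \<and> q * (2 * snd j) \<le> increment f j}"
  have cover: "\<exists>j. j \<in> K \<and> x \<in> cball (fst j) (snd j) \<and> snd j < d"
    if x: "x \<in> E" "i \<in> C" "x \<in> ball (fst i) (snd i)" and d: "0 < d" for x i d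
  proof -
    define \<rho> where "\<rho> = snd i - \<bar>x - fst i\<bar>"
    have \<rho>: "0 < \<rho>" using x by (auto simp: \<rho>_def dist_real_def)
    have "\<forall>d>0. \<exists>k. 0 < k \<and> k < d \<and> q * k \<le> f (x + k) - f x"
      using E x unfolding right_derivate_ge_def frequently_at_right_0_iff by blast
    then obtain k where k: "0 < k" "k < min d \<rho>" "q * k \<le> f (x + k) - f x"
      using d \<rho> by (meson min_less_iff_conj)
    define j where "j = (x + k/2, k/2)"
    have "ival j \<subseteq> ival i" using k by (auto simp: ival_eq_atLeastAtMost j_def \<rho>_def)
    then have "j \<in> K" using k x by (auto simp: K_def j_def increment_def add.commute)
    moreover have "x \<in> cball (fst j) (snd j)" "snd j < d" using k by (auto simp: j_def dist_real_def)
    ultimately show ?thesis by blast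
  qed
  obtain C' where C': "countable C'" "C' \<subseteq> K" "disjoint_ivals C'"
    "negligible (E \<inter> (\<Union>i\<in>C. ball (fst i) (snd i)) - (\<Union>j\<in>C'. ival j))"
  proof (rule Vitali_covering_theorem_cballs[of K snd "E \<inter> (\<Union>i\<in>C. ball (fst i) (snd i))" fst])
    show "0 < snd j" if "j \<in> K" for j using that by (simp add: K_def)
  qed (use cover that in \<open>auto simp: ival_def\<close>)
  show ?thesis by (rule that[OF C'(1,3,4)]) (use C'(2) in \<open>auto simp: K_def\<close>)
qed

lemma vitali_increment_bound:
  fixes f :: "real \<Rightarrow> real"
  assumes f: "mono f" and q: "0 < q"
    and C: "countable C" "\<forall>i\<in>C. 0 < snd i" "disjoint_ivals C"
    and U: "U \<in> lmeasurable" "\<forall>i\<in>C. ival i \<subseteq> U"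
    and E: "\<forall>y\<in>E. right_derivate_ge f y q" "negligible (E - (\<Union>i\<in>C. ival i))"
    and e: "0 < e"
  obtains T F where "T \<in> lmeasurable" "E \<subseteq> T" "finite F" "F \<subseteq> C"
    "q * (measure lebesgue T - e) \<le> (\<Sum>i\<in>F. increment f i)"
proof -
  define E' where "E' = E \<inter> (\<Union>i\<in>C. ball (fst i) (snd i))"
  obtain C' where C': "countable C'" "disjoint_ivals C'" "negligible (E' - (\<Union>j\<in>C'. ival j))"
    and K: "\<And>j. j \<in> C' \<Longrightarrow> 0 < snd j \<and> (\<exists>i\<in>C. ival j \<subseteq> ival i) \<and> q * (2 * snd j) \<le> increment f j"
    using vitali_cover_right_derivate_ge[OF E(1), of C thesis] unfolding E'_def by blast
  have C'_pos: "\<forall>j\<in>C'. 0 < snd j" and C'_U: "\<forall>j\<in>C'. ival j \<subseteq> U"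
    using K U(2) by blast+
  define W where "W = \<Union>(ival ` C')"
  have W: "W \<in> lmeasurable" unfolding W_def by (rule lmeasurable_Union_ivals[OF C'(1) U(1) C'_U])
  define N where "N = (E' - W) \<union> (E - (\<Union>i\<in>C. ival i)) \<union> (\<Union>i\<in>C. {fst i - snd i, fst i + snd i})"
  have N: "negligible N"
    unfolding N_def W_def using C'(3) E(2) C(1)
    by (intro negligible_Un negligible_countable_Union) auto
  have sphere: "x \<in> {c - r, c + r}" if "x \<in> cball c r" "x \<notin> ball c r" for x c r :: real
    using that by (auto simp: dist_real_def abs_if split: if_splits)
  have "E \<subseteq> W \<union> N"
  proof
    fix x assume x: "x \<in> E"
    show "x \<in> W \<union> N"
    proof (cases "x \<in> E'")
      case False
      then have "\<forall>i\<in>C. x \<notin> ball (fst i) (snd i)" using x by (auto simp: E'_def)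
      then show ?thesis using x sphere unfolding N_def ival_def by blast
    qed (auto simp: N_def)
  qed
  define T where "T = W \<union> N"
  have symdiff: "negligible ((W - T) \<union> (T - W))" by (rule negligible_subset[OF N]) (auto simp: T_def)
  have T: "T \<in> lmeasurable" "measure lebesgue T = measure lebesgue W"
    by (rule lmeasurable_negligible_symdiff[OF W symdiff]) (rule measure_negligible_symdiff[OF W symdiff])
  obtain F' where F': "finite F'" "F' \<subseteq> C'" "measure lebesgue W - e < (\<Sum>j\<in>F'. 2 * snd j)"
    using finite_ivals_approx_measure[OF C'(1) C'_pos C'(2) U(1) C'_U e] unfolding W_def by blast
  obtain \<sigma> where \<sigma>: "\<forall>j\<in>C'. \<sigma> j \<in> C \<and> ival j \<subseteq> ival (\<sigma> j)"
    using K by metis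
  have "q * (measure lebesgue T - e) \<le> q * (\<Sum>j\<in>F'. 2 * snd j)"
    using F'(3) T(2) q by simp
  also have "\<dots> \<le> (\<Sum>j\<in>F'. increment f j)"
    unfolding sum_distrib_left using F'(2) K by (intro sum_mono) auto
  also have "\<dots> \<le> (\<Sum>i\<in>\<sigma> ` F'. increment f i)"
    using F' C'_pos \<sigma> pairwise_subset[OF C'(2) F'(2)]
    by (intro sum_increment_le_refinement[OF f]) auto
  finally show ?thesis
    using that[of T "\<sigma> ` F'"] T(1) \<open>E \<subseteq> W \<union> N\<close> F' \<sigma> by (auto simp: T_def)
qed

text \<open>Lebesgue outer measure; only meaningful for bounded sets, where the infimum is over a
  non-empty set.\<close>

definition outer_lmeasure :: "real set \<Rightarrow> real" where
  "outer_lmeasure E = Inf {measure lebesgue T | T. E \<subseteq> T \<and> T \<in> lmeasurable}"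

lemma outer_lmeasure_le:
  assumes "E \<subseteq> T" "T \<in> lmeasurable"
  shows "outer_lmeasure E \<le> measure lebesgue T"
  unfolding outer_lmeasure_def by (rule cInf_lower) (use assms in \<open>auto intro: bdd_belowI[of _ 0]\<close>)

lemma outer_lmeasure_approx:
  assumes "E \<subseteq> {a..b}" "0 < e"
  obtains T where "E \<subseteq> T" "T \<in> lmeasurable" "measure lebesgue T < outer_lmeasure E + e"
proof -
  have "{measure lebesgue T | T. E \<subseteq> T \<and> T \<in> lmeasurable} \<noteq> {}" using assms(1) by auto
  from cInf_lessD[OF this, of "outer_lmeasure E + e"] assms(2) that show ?thesis
    by (auto simp: outer_lmeasure_def)
qed

lemma negligible_if_outer_lmeasure_le_0:
  assumes "E \<subseteq> {a..b}" "outer_lmeasure E \<le> 0"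
  shows "negligible E"
  unfolding negligible_outer
  using outer_lmeasure_approx[OF assms(1)] assms(2) by (smt (verit))

lemma open_lmeasurable_approx:
  assumes T: "T \<in> lmeasurable" and e: "0 < e"
  obtains U where "open U" "T \<subseteq> U" "U \<in> lmeasurable" "measure lebesgue U < measure lebesgue T + e"
proof -
  obtain U where U: "open U" "T \<subseteq> U" "U - T \<in> lmeasurable" "emeasure lebesgue (U - T) < ennreal e"
    using sets_lebesgue_outer_open[of T e] T e by auto
  have "measure lebesgue (U - T) < e"
    using U(3,4) e by (simp add: emeasure_eq_measure2 ennreal_less_iff)
  have eq: "U = T \<union> (U - T)" using U by auto
  then have "U \<in> lmeasurable" using T U(3) by (metis fmeasurable.Un)
  moreover have "measure lebesgue U \<le> measure lebesgue T + measure lebesgue (U - T)"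
    by (subst eq, rule measure_Un_le) (use T U(3) in auto)
  ultimately show ?thesis using that U \<open>measure lebesgue (U - T) < e\<close> by force
qed

lemma vitali_cover_left_derivate_le:
  fixes f :: "real \<Rightarrow> real"
  assumes U: "open U" "E \<subseteq> U" and E: "\<forall>x\<in>E. left_derivate_le f x p"
  obtains C where "countable C" "disjoint_ivals C" "negligible (E - (\<Union>i\<in>C. ival i))"
    "\<And>i. i \<in> C \<Longrightarrow> 0 < snd i \<and> ival i \<subseteq> U \<and> increment f i \<le> p * (2 * snd i)"
proof -
  define K where "K = {i. 0 < snd i \<and> ival i \<subseteq> U \<and> increment f i \<le> p * (2 * snd i)}"
  have cover: "\<exists>i. i \<in> K \<and> x \<in> cball (fst i) (snd i) \<and> snd i < d"
    if x: "x \<in> E" and d: "0 < d" for x d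
  proof -
    obtain \<rho> where \<rho>: "0 < \<rho>" "ball x \<rho> \<subseteq> U" using U x open_contains_ball by blast
    have "\<forall>d>0. \<exists>h. 0 < h \<and> h < d \<and> f x - f (x - h) \<le> p * h"
      using E x unfolding left_derivate_le_def frequently_at_right_0_iff by blast
    then obtain h where h: "0 < h" "h < min d \<rho>" "f x - f (x - h) \<le> p * h"
      using d \<rho> by (meson min_less_iff_conj)
    define i where "i = (x - h/2, h/2)"
    have "ival i \<subseteq> ball x \<rho>" using h by (auto simp: ival_eq_atLeastAtMost i_def dist_real_def)
    then have "i \<in> K" using h \<rho>(2) unfolding K_def by (simp add: i_def increment_def)
    moreover have "x \<in> cball (fst i) (snd i)" "snd i < d" using h by (auto simp: i_def dist_real_def)
    ultimately show ?thesis by blast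
  qed
  obtain C where C: "countable C" "C \<subseteq> K" "disjoint_ivals C" "negligible (E - (\<Union>i\<in>C. ival i))"
  proof (rule Vitali_covering_theorem_cballs[of K snd E fst])
    show "0 < snd i" if "i \<in> K" for i using that by (simp add: K_def)
  qed (use cover that in \<open>auto simp: ival_def\<close>)
  show ?thesis by (rule that[OF C(1,3,4)]) (use C(2) in \<open>auto simp: K_def\<close>)
qed

lemma sum_ival_lengths_le_measure:
  assumes "finite F" "\<forall>i\<in>F. 0 < snd i" "disjoint_ivals F" "\<forall>i\<in>F. ival i \<subseteq> U" "U \<in> lmeasurable"
  shows "(\<Sum>i\<in>F. 2 * snd i) \<le> measure lebesgue U"
proof -
  have "(\<Sum>i\<in>F. 2 * snd i) = measure lebesgue (\<Union>(ival ` F))"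
    using measure_Union_ivals[OF assms(1-3)] by simp
  also have "\<dots> \<le> measure lebesgue U"
  proof (rule measure_mono_fmeasurable)
    show "\<Union>(ival ` F) \<subseteq> U" using assms(4) by blast
    show "\<Union>(ival ` F) \<in> sets lebesgue" using assms(1) by (intro sets.finite_UN) auto
  qed (fact assms(5))
  finally show ?thesis .
qed

lemma outer_lmeasure_left_le_right_ge:
  fixes f :: "real \<Rightarrow> real"
  assumes f: "mono f" and pq: "0 < p" "p < q" and E: "E \<subseteq> {a..b}"
    and derivates: "\<forall>x\<in>E. left_derivate_le f x p \<and> right_derivate_ge f x q" and e: "0 < e"
  shows "q * (outer_lmeasure E - e) \<le> p * (outer_lmeasure E + 2 * e)"
proof -
  obtain T0 where T0: "E \<subseteq> T0" "T0 \<in> lmeasurable" "measure lebesgue T0 < outer_lmeasure E + e"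
    using outer_lmeasure_approx[OF E e] .
  obtain U where U: "open U" "T0 \<subseteq> U" "U \<in> lmeasurable" "measure lebesgue U < measure lebesgue T0 + e"
    using open_lmeasurable_approx[OF T0(2) e] .
  obtain C where C: "countable C" "disjoint_ivals C" "negligible (E - (\<Union>i\<in>C. ival i))"
    and K: "\<And>i. i \<in> C \<Longrightarrow> 0 < snd i \<and> ival i \<subseteq> U \<and> increment f i \<le> p * (2 * snd i)"
    using vitali_cover_left_derivate_le[OF U(1), of E f p] U(2) T0(1) derivates by blast
  have C_pos: "\<forall>i\<in>C. 0 < snd i" and C_U: "\<forall>i\<in>C. ival i \<subseteq> U" using K by blast+
  obtain T F where TF: "T \<in> lmeasurable" "E \<subseteq> T" "finite F" "F \<subseteq> C"
    "q * (measure lebesgue T - e) \<le> (\<Sum>i\<in>F. increment f i)"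
  proof (rule vitali_increment_bound[OF f _ C(1) C_pos C(2) U(3) C_U _ C(3) e])
    show "0 < q" using pq by simp
    show "\<forall>y\<in>E. right_derivate_ge f y q" using derivates by blast
  qed
  have "(\<Sum>i\<in>F. increment f i) \<le> p * (\<Sum>i\<in>F. 2 * snd i)"
    unfolding sum_distrib_left using TF(4) K by (intro sum_mono) auto
  also have "\<dots> \<le> p * measure lebesgue U"
  proof -
    have "\<forall>i\<in>F. 0 < snd i" "\<forall>i\<in>F. ival i \<subseteq> U" using C_pos C_U TF(4) by blast+
    from sum_ival_lengths_le_measure[OF TF(3) this(1) pairwise_subset[OF C(2) TF(4)] this(2) U(3)]
    show ?thesis using pq by simp
  qed
  finally have "q * (measure lebesgue T - e) \<le> p * measure lebesgue U" using TF(5) by linarith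
  moreover have "p * measure lebesgue U \<le> p * (outer_lmeasure E + 2 * e)" using U(4) T0(3) pq by simp
  moreover have "q * (outer_lmeasure E - e) \<le> q * (measure lebesgue T - e)"
    using outer_lmeasure_le[OF TF(2,1)] pq by simp
  ultimately show ?thesis by linarith
qed

lemma negligible_left_le_right_ge:
  fixes f :: "real \<Rightarrow> real"
  assumes f: "mono f" and pq: "0 < p" "p < q"
  shows "negligible {x. left_derivate_le f x p \<and> right_derivate_ge f x q}"
proof (rule negligible_on_intervals[THEN iffD2], intro allI)
  fix a b :: real
  let ?E = "{x. left_derivate_le f x p \<and> right_derivate_ge f x q} \<inter> cbox a b"
  have E: "?E \<subseteq> {a..b}" by auto
  have bound: "(q - p) * outer_lmeasure ?E \<le> (q + 2 * p) * d" if "0 < d" for d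
  proof -
    have "q * (outer_lmeasure ?E - d) \<le> p * (outer_lmeasure ?E + 2 * d)"
      by (rule outer_lmeasure_left_le_right_ge[OF f pq E _ that]) auto
    then show ?thesis by (simp add: algebra_simps)
  qed
  have "(q - p) * outer_lmeasure ?E \<le> 0"
  proof (rule field_le_epsilon)
    fix e :: real assume "0 < e"
    then show "(q - p) * outer_lmeasure ?E \<le> 0 + e"
      using bound[of "e / (q + 2 * p)"] pq by simp
  qed
  then show "negligible ?E"
    using pq by (intro negligible_if_outer_lmeasure_le_0[OF E]) (simp add: mult_le_0_iff)
qed

lemma negligible_uminus_image:
  fixes S :: "real set"
  assumes "negligible S"
  shows "negligible (uminus ` S)"
  using assms by (intro negligible_differentiable_image_negligible) auto

lemma mono_reflect: "mono f \<Longrightarrow> mono (\<lambda>y::real. - f (- y) :: real)"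
  by (simp add: mono_def)

lemma negligible_right_le_left_ge:
  fixes f :: "real \<Rightarrow> real"
  assumes f: "mono f" and pq: "0 < p" "p < q"
  shows "negligible {x. right_derivate_le f x p \<and> left_derivate_ge f x q}"
proof -
  let ?g = "\<lambda>y. - f (- y)"
  have "{x. right_derivate_le f x p \<and> left_derivate_ge f x q}
      \<subseteq> uminus ` {y. left_derivate_le ?g y p \<and> right_derivate_ge ?g y q}"
  proof
    fix x assume "x \<in> {x. right_derivate_le f x p \<and> left_derivate_ge f x q}"
    then show "x \<in> uminus ` {y. left_derivate_le ?g y p \<and> right_derivate_ge ?g y q}"
      by (intro image_eqI[of _ _ "- x"]) auto
  qed
  moreover have "negligible (uminus ` {y. left_derivate_le ?g y p \<and> right_derivate_ge ?g y q})"
    by (rule negligible_uminus_image[OF negligible_left_le_right_ge[OF mono_reflect[OF f] pq]])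
  ultimately show ?thesis by (rule negligible_subset[rotated])
qed

lemma tendsto_if_no_oscillation:
  fixes g :: "'a \<Rightarrow> real"
  assumes F: "F \<noteq> bot" and bounded: "\<forall>\<^sub>F h in F. \<bar>g h\<bar> \<le> B"
    and no_oscillation: "\<And>p q. p < q \<Longrightarrow> (\<exists>\<^sub>F h in F. g h \<le> p) \<Longrightarrow> (\<exists>\<^sub>F h in F. q \<le> g h) \<Longrightarrow> False"
  shows "\<exists>l. (g \<longlongrightarrow> l) F"
proof -
  let ?G = "\<lambda>h. ereal (g h)"
  have low: "\<exists>\<^sub>F h in F. g h \<le> p" if "Liminf F ?G < ereal p" for p
  proof -
    have "\<not> (\<forall>y<ereal p. \<forall>\<^sub>F h in F. y < ?G h)"
      using that unfolding le_Liminf_iff[symmetric] by (simp add: not_le)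
    then obtain y where y: "y < ereal p" "\<not> (\<forall>\<^sub>F h in F. y < ?G h)" by blast
    then have "\<exists>\<^sub>F h in F. ?G h \<le> y" by (simp add: not_eventually not_less)
    then show ?thesis by (rule frequently_elim1) (use y(1) in \<open>simp flip: ereal_less_eq(3)\<close>)
  qed
  have high: "\<exists>\<^sub>F h in F. q \<le> g h" if "ereal q < Limsup F ?G" for q
  proof -
    have "\<not> (\<forall>y>ereal q. \<forall>\<^sub>F h in F. ?G h < y)"
      using that unfolding Limsup_le_iff[symmetric] by (simp add: not_le)
    then obtain y where y: "ereal q < y" "\<not> (\<forall>\<^sub>F h in F. ?G h < y)" by blast
    then have "\<exists>\<^sub>F h in F. y \<le> ?G h" by (simp add: not_eventually not_less)
    then show ?thesis by (rule frequently_elim1) (use y(1) in \<open>simp flip: ereal_less_eq(3)\<close>)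
  qed
  have "\<not> Liminf F ?G < Limsup F ?G"
  proof
    assume "Liminf F ?G < Limsup F ?G"
    then obtain p where p: "Liminf F ?G < ereal p" "ereal p < Limsup F ?G" using ereal_dense2 by blast
    then obtain q where q: "ereal p < ereal q" "ereal q < Limsup F ?G" using ereal_dense2 by blast
    show False using no_oscillation[of p q] low[OF p(1)] high[OF q(2)] q(1) by simp
  qed
  then have eq: "Liminf F ?G = Limsup F ?G" using Liminf_le_Limsup[OF F, of ?G] by (simp add: order_le_less)
  have "ereal (- B) \<le> Liminf F ?G" "Limsup F ?G \<le> ereal B"
    using bounded by (auto intro!: Liminf_bounded Limsup_bounded elim!: eventually_mono)
  then have "\<bar>Limsup F ?G\<bar> \<noteq> \<infinity>" using eq by auto
  then have "(?G \<longlongrightarrow> ereal (real_of_ereal (Limsup F ?G))) F"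
    using Liminf_eq_Limsup[OF F, of ?G] eq by (simp add: ereal_real')
  then show ?thesis by auto
qed

lemma negligible_right_derivate_unbounded:
  fixes f :: "real \<Rightarrow> real"
  assumes f: "mono f"
  shows "negligible {x. \<forall>M. right_derivate_ge f x M}"
proof (rule negligible_on_intervals[THEN iffD2], intro allI)
  fix a b :: real
  let ?E = "{x. \<forall>M. right_derivate_ge f x M} \<inter> cbox a b"
  show "negligible ?E"
  proof (cases "a \<le> b")
    case ab: True
    define c where "c = ((a + b) / 2, (b - a) / 2 + 1)"
    have c: "0 < snd c" "fst c - snd c = a - 1" "fst c + snd c = b + 1"
      using ab by (auto simp: c_def field_simps)
    have E_c: "?E \<subseteq> ival c" using c by (auto simp: ival_eq_atLeastAtMost)
    define \<Delta> where "\<Delta> = f (b + 1) - f (a - 1)"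
    have \<Delta>: "0 \<le> \<Delta>" using f ab by (simp add: \<Delta>_def mono_def)
    show ?thesis
    proof (rule negligible_outer[THEN iffD2], intro allI impI)
      fix e :: real assume e: "0 < e"
      define M where "M = 2 * (\<Delta> + 1) / e"
      have M: "0 < M" using \<Delta> e by (simp add: M_def)
      obtain T F where TF: "T \<in> lmeasurable" "?E \<subseteq> T" "F \<subseteq> {c}"
        "M * (measure lebesgue T - e / 2) \<le> (\<Sum>i\<in>F. increment f i)"
        by (rule vitali_increment_bound[OF f M, of "{c}" "ival c" ?E "e / 2"])
           (use c E_c e in auto)
      have "(\<Sum>i\<in>F. increment f i) \<le> \<Delta>"
        using TF(3) \<Delta> by (cases "F = {}") (auto simp: increment_def c \<Delta>_def subset_singleton_iff)
      then have "measure lebesgue T - e / 2 \<le> \<Delta> / M" using TF(4) M by (simp add: field_simps)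
      also have "\<Delta> / M < e / 2" using e \<Delta> by (simp add: M_def field_simps)
      finally show "\<exists>T. ?E \<subseteq> T \<and> T \<in> lmeasurable \<and> measure lebesgue T < e"
        using TF(1,2) by auto
    qed
  qed simp
qed

lemma negligible_left_derivate_unbounded:
  fixes f :: "real \<Rightarrow> real"
  assumes f: "mono f"
  shows "negligible {x. \<forall>M. left_derivate_ge f x M}"
proof -
  let ?g = "\<lambda>y. - f (- y)"
  have "{x. \<forall>M. left_derivate_ge f x M} \<subseteq> uminus ` {y. \<forall>M. right_derivate_ge ?g y M}"
  proof
    fix x assume "x \<in> {x. \<forall>M. left_derivate_ge f x M}"
    then show "x \<in> uminus ` {y. \<forall>M. right_derivate_ge ?g y M}"
      by (intro image_eqI[of _ _ "- x"]) auto
  qed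
  moreover have "negligible (uminus ` {y. \<forall>M. right_derivate_ge ?g y M})"
    by (rule negligible_uminus_image[OF negligible_right_derivate_unbounded[OF mono_reflect[OF f]]])
  ultimately show ?thesis by (rule negligible_subset[rotated])
qed

lemma mono_differentiable_at_if_derivates_agree:
  fixes f :: "real \<Rightarrow> real"
  assumes f: "mono f"
    and no_cross: "\<And>p q. 0 \<le> p \<Longrightarrow> p < q \<Longrightarrow>
      \<not> (left_derivate_le f x p \<and> right_derivate_ge f x q) \<and>
      \<not> (right_derivate_le f x p \<and> left_derivate_ge f x q)"
    and bounded: "\<exists>M. \<not> right_derivate_ge f x M" "\<exists>M. \<not> left_derivate_ge f x M"
  shows "f differentiable (at x)"
proof -
  define g where "g h = (f (x + h) - f x) / h" for h
  have g_nonneg: "0 \<le> g h" for h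
    using f by (cases h "0 :: real" rule: linorder_cases) (auto simp: g_def mono_def divide_nonpos_neg)
  obtain M1 M2 where "\<not> right_derivate_ge f x M1" "\<not> left_derivate_ge f x M2" using bounded by blast
  then have "\<forall>\<^sub>F h in at_right 0. g h < M1" "\<forall>\<^sub>F h in at_left 0. g h < M2"
    unfolding derivate_iff_quotient not_frequently g_def by (simp_all add: not_le)
  then have "\<forall>\<^sub>F h in at 0. \<bar>g h\<bar> \<le> max M1 M2"
    unfolding eventually_at_split by (auto elim!: eventually_mono simp: g_nonneg)
  moreover have "False" if pq: "p < q" "\<exists>\<^sub>F h in at 0. g h \<le> p" "\<exists>\<^sub>F h in at 0. q \<le> g h" for p q
  proof -
    have le: "right_derivate_le f x p \<or> left_derivate_le f x p"
      and ge: "right_derivate_ge f x q \<or> left_derivate_ge f x q"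
      using pq(2,3) unfolding derivate_iff_quotient frequently_def eventually_at_split g_def by auto
    have "0 \<le> p" using frequently_ex[OF pq(2)] g_nonneg order_trans by blast
    define m where "m = (p + q) / 2"
    have m: "p < m" "m < q" using pq(1) by (auto simp: m_def)
    have "0 \<le> m" using \<open>0 \<le> p\<close> m by simp
    txt \<open>Whichever way the dichotomies at the midpoint \<open>m\<close> fall, some pair of
      one-sided derivates crosses between \<open>p\<close> and \<open>q\<close>.\<close>
    note up = derivate_mono[OF less_imp_le[OF m(1)], where f = f and x = x]
      and down = derivate_mono[OF less_imp_le[OF m(2)], where f = f and x = x]
    show False
      using le ge derivate_le_or_ge[of f x m] up down
        no_cross[OF \<open>0 \<le> p\<close> m(1)] no_cross[OF \<open>0 \<le> m\<close> m(2)] no_cross[OF \<open>0 \<le> p\<close> pq(1)]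
      by blast
  qed
  ultimately obtain l where "(g \<longlongrightarrow> l) (at 0)"
    using tendsto_if_no_oscillation[of "at 0" g "max M1 M2"] by auto
  then have "(f has_real_derivative l) (at x)" unfolding DERIV_def g_def .
  then show ?thesis unfolding real_differentiable_def by blast
qed

lemma rat_between:
  fixes x y :: real
  assumes "x < y"
  obtains r :: rat where "x < of_rat r" "of_rat r < y"
  using Rats_dense_in_real[OF assms] by (metis Rats_cases)

theorem mono_differentiable_ae:
  fixes f :: "real \<Rightarrow> real"
  assumes f: "mono f"
  shows "negligible {x. \<not> f differentiable (at x)}"
proof -
  define Cross where "Cross = (\<lambda>(p :: rat, q :: rat).
    {x. left_derivate_le f x (of_rat p) \<and> right_derivate_ge f x (of_rat q)} \<union>
    {x. right_derivate_le f x (of_rat p) \<and> left_derivate_ge f x (of_rat q)})"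
  define Bad where "Bad = \<Union>(Cross ` {(p, q). 0 < p \<and> p < q}) \<union>
    {x. \<forall>M. right_derivate_ge f x M} \<union> {x. \<forall>M. left_derivate_ge f x M}"
  have "negligible (Cross (p, q))" if "0 < p" "p < q" for p q
    using that negligible_left_le_right_ge[OF f] negligible_right_le_left_ge[OF f]
    by (simp add: Cross_def of_rat_less negligible_Un)
  then have "negligible (\<Union>(Cross ` {(p, q). 0 < p \<and> p < q}))"
    by (intro negligible_countable_Union countable_image countableI_type) auto
  then have "negligible Bad"
    unfolding Bad_def using negligible_right_derivate_unbounded[OF f] negligible_left_derivate_unbounded[OF f]
    by (intro negligible_Un)
  moreover have "f differentiable (at x)" if "x \<notin> Bad" for x
  proof (rule mono_differentiable_at_if_derivates_agree[OF f])
    fix p q :: real assume "0 \<le> p" "p < q"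
    obtain p' where p': "p < of_rat p'" "of_rat p' < q" using rat_between[OF \<open>p < q\<close>] .
    obtain q' where q': "(of_rat p' :: real) < of_rat q'" "of_rat q' < q" using rat_between[OF p'(2)] .
    have "(0 :: real) < of_rat p'" using \<open>0 \<le> p\<close> p'(1) by linarith
    then have "0 < p'" "p' < q'" using q'(1) by (simp_all add: of_rat_less)
    then have "x \<notin> Cross (p', q')" using that by (auto simp: Bad_def)
    then show "\<not> (left_derivate_le f x p \<and> right_derivate_ge f x q) \<and>
      \<not> (right_derivate_le f x p \<and> left_derivate_ge f x q)"
      using derivate_mono[OF less_imp_le[OF p'(1)], where f = f and x = x]
        derivate_mono[OF less_imp_le[OF q'(2)], where f = f and x = x]
      by (auto simp: Cross_def)
  qed (use that in \<open>auto simp: Bad_def\<close>)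
  ultimately show ?thesis by (blast intro: negligible_subset)
qed

section \<open>The derivative of a monotone function is locally integrable\<close>

lemma integral_difference_quotient_le:
  fixes f :: "real \<Rightarrow> real"
  assumes f: "mono f" and ab: "a \<le> b" and d: "0 < d"
  shows "integral {a..b} (\<lambda>u. (f (u + d) - f u) / d) \<le> f (b + d) - f a"
proof -
  have int: "f integrable_on {x..y}" for x y
    using f by (intro integrable_on_mono_on) (simp add: mono_on_def mono_def)
  have shifted: "(\<lambda>u. f (u + d)) integrable_on {a..b}"
    using f by (intro integrable_on_mono_on) (simp add: mono_on_def mono_def)
  have "integral {a..b} (\<lambda>u. f (u + d)) = integral {a+d..b+d} f"
    using integral_shift_Icc_real[of a b f d] by (simp add: o_def add.commute)
  moreover have "integral {a..a+d} f + integral {a+d..b+d} f = integral {a..b} f + integral {b..b+d} f"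
    using Henstock_Kurzweil_Integration.integral_combine[OF _ _ int, of a "a + d" "b + d"]
      Henstock_Kurzweil_Integration.integral_combine[OF _ _ int, of a b "b + d"] ab d by simp
  moreover have "integral {a..a+d} (\<lambda>_. f a) \<le> integral {a..a+d} f"
    by (rule integral_le) (use int f in \<open>auto simp: mono_def\<close>)
  moreover have "integral {b..b+d} f \<le> integral {b..b+d} (\<lambda>_. f (b + d))"
    by (rule integral_le) (use int f in \<open>auto simp: mono_def\<close>)
  ultimately have "integral {a..b} (\<lambda>u. f (u + d)) - integral {a..b} f \<le> d * (f (b + d) - f a)"
    using d by (simp add: algebra_simps)
  then show ?thesis
    using shifted int[of a b] d by (simp add: integral_diff pos_divide_le_eq mult.commute)
qed

lemma difference_quotient_tendsto_deriv:
  fixes f :: "real \<Rightarrow> real"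
  assumes "f differentiable (at u)"
  shows "(\<lambda>n. (f (u + 1 / Suc n) - f u) * Suc n) \<longlonglongrightarrow> deriv f u"
proof -
  have "((\<lambda>h. (f (u + h) - f u) / h) \<longlongrightarrow> deriv f u) (at 0)"
    using assms DERIV_deriv_iff_real_differentiable DERIV_def by blast
  moreover have "filterlim (\<lambda>n::nat. 1 / real (Suc n)) (at 0) sequentially"
    unfolding filterlim_at using LIMSEQ_Suc[OF lim_const_over_n[of 1]] by simp
  ultimately show ?thesis using filterlim_compose by fastforce
qed

lemma absolutely_integrable_on_limit_of_bounded_integrals:
  fixes g :: "nat \<Rightarrow> real \<Rightarrow> real" and h :: "real \<Rightarrow> real"
  assumes g: "\<And>n. g n \<in> borel_measurable borel" "\<And>n u. 0 \<le> g n u"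
    "\<And>n. g n integrable_on {a..b}" "\<And>n. integral {a..b} (g n) \<le> C"
    and h: "h \<in> borel_measurable borel" and N: "negligible N"
    and lim: "\<And>u. u \<notin> N \<Longrightarrow> (\<lambda>n. g n u) \<longlonglongrightarrow> h u"
  shows "h absolutely_integrable_on {a..b}"
proof -
  define G where "G n u = ennreal (g n u) * indicator {a..b} u" for n u
  have "AE u in lebesgue. u \<notin> N"
    using N by (intro AE_not_in) (simp add: negligible_iff_null_sets)
  then have "AE u in lebesgue. ennreal (h u) * indicator {a..b} u = liminf (\<lambda>n. G n u)
      \<and> 0 \<le> h u"
  proof (rule AE_mp, intro AE_I2 impI)
    fix u assume "u \<notin> N"
    then have "(\<lambda>n. G n u) \<longlonglongrightarrow> ennreal (h u) * indicator {a..b} u"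
      using tendsto_ennrealI[OF lim[OF \<open>u \<notin> N\<close>]] by (cases "u \<in> {a..b}") (simp_all add: G_def)
    then show "ennreal (h u) * indicator {a..b} u = liminf (\<lambda>n. G n u) \<and> 0 \<le> h u"
      using LIMSEQ_le_const[OF lim[OF \<open>u \<notin> N\<close>]] g(2) lim_imp_Liminf by force
  qed
  then have ae: "AE u in lborel. ennreal (h u) * indicator {a..b} u = liminf (\<lambda>n. G n u)"
    and h_nonneg: "AE u in lborel. 0 \<le> h u"
    by (simp_all add: AE_completion_iff)
  have "(\<integral>\<^sup>+ u. ennreal (h u) * indicator {a..b} u \<partial>lborel) = (\<integral>\<^sup>+ u. liminf (\<lambda>n. G n u) \<partial>lborel)"
    by (rule nn_integral_cong_AE[OF ae])
  also have "\<dots> \<le> liminf (\<lambda>n. integral\<^sup>N lborel (G n))"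
    by (rule nn_integral_liminf) (use g(1) in \<open>simp add: G_def\<close>)
  also have "\<dots> \<le> ennreal C"
  proof (rule Liminf_le, simp, intro always_eventually allI)
    fix n
    have "integral\<^sup>N lborel (G n) = ennreal (integral {a..b} (g n))"
      unfolding G_def by (rule nn_integral_has_integral_lebesgue') (use g in auto)
    then show "integral\<^sup>N lborel (G n) \<le> ennreal C" using g(4) by (simp add: ennreal_leI)
  qed
  also have "\<dots> < \<infinity>" by simp
  finally have "(\<integral>\<^sup>+ u. ennreal (h u) * indicator {a..b} u \<partial>lborel) < \<infinity>" .
  moreover have "(\<lambda>u. ennreal (indicator {a..b} u *\<^sub>R h u)) = (\<lambda>u. ennreal (h u) * indicator {a..b} u)"
    by (auto simp: indicator_def fun_eq_iff)
  ultimately have "(\<integral>\<^sup>+ u. ennreal (indicator {a..b} u *\<^sub>R h u) \<partial>lborel) < \<infinity>" by simp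
  then have "integrable lborel (\<lambda>u. indicator {a..b} u *\<^sub>R h u)"
  proof (rule integrableI_nonneg[rotated 2])
    show "(\<lambda>u. indicator {a..b} u *\<^sub>R h u) \<in> borel_measurable lborel" using h by measurable
    show "AE u in lborel. 0 \<le> indicator {a..b} u *\<^sub>R h u"
      using h_nonneg by eventually_elim (simp add: indicator_def)
  qed
  then show ?thesis unfolding set_integrable_def
    by (subst integrable_completion) (use h in measurable)
qed

lemma mono_difference_quotients:
  fixes f :: "real \<Rightarrow> real"
  assumes f: "mono f" and ab: "a \<le> b"
  defines "g \<equiv> \<lambda>n u. (f (u + 1 / Suc n) - f u) * Suc n"
  shows "g n \<in> borel_measurable borel" "0 \<le> g n u"
    "g n integrable_on {a..b}" "integral {a..b} (g n) \<le> f (b + 1) - f a"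
proof -
  have "(\<lambda>u. f (u + 1 / Suc n)) \<in> borel_measurable borel"
    by (rule borel_measurable_mono) (use f in \<open>simp add: mono_def\<close>)
  then show "g n \<in> borel_measurable borel" unfolding g_def using borel_measurable_mono[OF f] by measurable
  show "0 \<le> g n u" using f by (simp add: g_def mono_def)
  have g_eq: "g n = (\<lambda>u. (f (u + 1 / Suc n) - f u) / (1 / Suc n))" by (auto simp: g_def)
  have "(\<lambda>u. f (u + 1 / Suc n)) integrable_on {a..b}" "f integrable_on {a..b}"
    using f by (auto intro!: integrable_on_mono_on simp: mono_on_def mono_def)
  then show "g n integrable_on {a..b}" unfolding g_eq by (auto intro!: integrable_diff integrable_on_divide)
  have "f (b + 1 / Suc n) \<le> f (b + 1)" using f by (simp add: mono_def)
  then show "integral {a..b} (g n) \<le> f (b + 1) - f a"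
    using integral_difference_quotient_le[OF f ab, of "1 / Suc n"] unfolding g_eq by simp
qed

lemma mono_deriv_absolutely_integrable:
  fixes f :: "real \<Rightarrow> real"
  assumes f: "mono f"
  shows "deriv f absolutely_integrable_on {a..b}"
proof (cases "a \<le> b")
  case ab: True
  define g where "g n u = (f (u + 1 / Suc n) - f u) * Suc n" for n u
  note g = mono_difference_quotients[OF f ab, folded g_def]
  txt \<open>\<open>deriv f\<close> is not known to be measurable; \<open>h\<close> is a Borel version of it.\<close>
  define h where "h u = max 0 (lim (\<lambda>n. g n u))" for u
  define N where "N = {x. \<not> f differentiable (at x)}"
  have lim: "(\<lambda>n. g n u) \<longlonglongrightarrow> deriv f u" and deriv_eq: "deriv f u = h u" if "u \<notin> N" for u
  proof -
    show lim: "(\<lambda>n. g n u) \<longlonglongrightarrow> deriv f u"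
      using difference_quotient_tendsto_deriv that by (simp add: N_def g_def)
    show "deriv f u = h u" using LIMSEQ_le_const[OF lim] g(2) limI[OF lim] by (force simp: h_def)
  qed
  have "h absolutely_integrable_on {a..b}"
  proof (rule absolutely_integrable_on_limit_of_bounded_integrals[where g = g and N = N])
    show "h \<in> borel_measurable borel" unfolding h_def using g(1) by measurable
    show "negligible N" unfolding N_def by (rule mono_differentiable_ae[OF f])
    show "(\<lambda>n. g n u) \<longlonglongrightarrow> h u" if "u \<notin> N" for u using lim[OF that] deriv_eq[OF that] by simp
  qed (use g in auto)
  then show ?thesis
    by (rule absolutely_integrable_spike[OF _ mono_differentiable_ae[OF f, folded N_def]])
       (simp add: deriv_eq)
qed (simp add: set_integrable_def)

section \<open>The Bahadur efficiency of TFisher under the mixture alternative\<close>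

lemma cdf_with_density_integral:
  assumes "cdf_with_density G"
  obtains g where "g \<in> borel_measurable borel" "\<And>x. 0 \<le> g x" "integrable lborel g"
    "integral\<^sup>L lborel g = 1" "\<And>x. G x = integral\<^sup>L lborel (\<lambda>t. indicator {..x} t * g t)"
  using assms unfolding cdf_with_density_def set_lebesgue_integral_def by auto

lemma cdf_with_density_mono:
  assumes "cdf_with_density G"
  shows "mono G"
proof
  fix x y :: real assume "x \<le> y"
  obtain g where g: "g \<in> borel_measurable borel" "\<And>x. 0 \<le> g x" "integrable lborel g"
    "\<And>x. G x = integral\<^sup>L lborel (\<lambda>t. indicator {..x} t * g t)"
    using cdf_with_density_integral[OF assms] by metis
  show "G x \<le> G y" unfolding g(4) using \<open>x \<le> y\<close> g(2)
    by (intro integral_mono integrable_mult_indicator[OF _ g(3), simplified])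
       (auto simp: indicator_def)
qed

lemma cdf_with_density_bounds:
  assumes "cdf_with_density G"
  shows "0 \<le> G x" "G x \<le> 1"
proof -
  obtain g where g: "g \<in> borel_measurable borel" "\<And>x. 0 \<le> g x" "integrable lborel g"
    "integral\<^sup>L lborel g = 1" "\<And>x. G x = integral\<^sup>L lborel (\<lambda>t. indicator {..x} t * g t)"
    using cdf_with_density_integral[OF assms] by metis
  show "0 \<le> G x" unfolding g(5) using g(2) by (intro integral_nonneg_AE) auto
  have "G x \<le> integral\<^sup>L lborel g" unfolding g(5) using g(2)
    by (intro integral_mono integrable_mult_indicator[OF _ g(3), simplified] g(3))
       (auto simp: indicator_def)
  then show "G x \<le> 1" using g(4) by simp
qed

lemma cdf_with_density_limits:
  assumes "cdf_with_density G"
  shows "(\<lambda>n. G (real n)) \<longlonglongrightarrow> 1" "(\<lambda>n. G (- real n)) \<longlonglongrightarrow> 0"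
proof -
  obtain g where g: "g \<in> borel_measurable borel" "\<And>x. 0 \<le> g x" "integrable lborel g"
    "integral\<^sup>L lborel g = 1" "\<And>x. G x = integral\<^sup>L lborel (\<lambda>t. indicator {..x} t * g t)"
    using cdf_with_density_integral[OF assms] by metis
  have lim: "(\<lambda>n. G (c n)) \<longlonglongrightarrow> integral\<^sup>L lborel (\<lambda>t. L * g t)"
    if "\<And>t. (\<lambda>n. indicator {..c n} t) \<longlonglongrightarrow> (L :: real)" for c L
    unfolding g(5)
  proof (rule integral_dominated_convergence[where w = g])
    show "AE t in lborel. (\<lambda>n. indicator {..c n} t * g t) \<longlonglongrightarrow> L * g t"
      using that by (intro AE_I2 tendsto_mult_right)
    show "AE t in lborel. norm (indicator {..c n} t * g t) \<le> g t" for n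
      using g(2) by (intro AE_I2) (auto simp: indicator_def)
  qed (use g in auto)
  have "(\<lambda>n. indicator {..real n} t) \<longlonglongrightarrow> (1 :: real)" for t
  proof -
    obtain N :: nat where N: "t \<le> real N" using real_arch_simple by blast
    have "\<forall>\<^sub>F n in sequentially. indicator {..real n} t = (1 :: real)"
      using eventually_ge_at_top[of N] by eventually_elim (use N in \<open>auto simp: indicator_def\<close>)
    then show ?thesis by (rule tendsto_eventually)
  qed
  from lim[OF this] show "(\<lambda>n. G (real n)) \<longlonglongrightarrow> 1" using g(4) by simp
  have "(\<lambda>n. indicator {..- real n} t) \<longlonglongrightarrow> (0 :: real)" for t
  proof -
    obtain N :: nat where N: "- t < real N" using reals_Archimedean2 by blast
    have "\<forall>\<^sub>F n in sequentially. indicator {..- real n} t = (0 :: real)"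
      using eventually_ge_at_top[of N] by eventually_elim (use N in \<open>auto simp: indicator_def\<close>)
    then show ?thesis by (rule tendsto_eventually)
  qed
  from lim[OF this] show "(\<lambda>n. G (- real n)) \<longlonglongrightarrow> 0" by simp
qed

lemma cdf_with_density_level_bounds:
  assumes G: "cdf_with_density G" and y: "0 < y" "y < 1"
  obtains a b where "a \<le> b" "G a < y" "y < G b" "\<And>t. y \<le> G t \<Longrightarrow> a \<le> t"
proof -
  have "\<forall>\<^sub>F n in sequentially. y < G (real n)"
    using order_tendstoD(1)[OF cdf_with_density_limits(1)[OF G], of y] y by simp
  then obtain n :: nat where n: "y < G (real n)" unfolding eventually_sequentially by blast
  have "\<forall>\<^sub>F m in sequentially. G (- real m) < y"
    using order_tendstoD(2)[OF cdf_with_density_limits(2)[OF G], of y] y by simp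
  then obtain m :: nat where m: "G (- real m) < y" unfolding eventually_sequentially by blast
  have "- real m \<le> t" if "y \<le> G t" for t
  proof (rule ccontr)
    assume "\<not> - real m \<le> t"
    then have "G t \<le> G (- real m)" by (intro monoD[OF cdf_with_density_mono[OF G]]) simp
    then show False using m that by simp
  qed
  moreover have "- real m \<le> real n" by simp
  ultimately show ?thesis using that n m by blast
qed

lemma Fbar0_inv_eq_Inf: "Fbar0_inv G0 x = Inf {t. 1 - x \<le> G0 t}"
  unfolding Fbar0_inv_def Fbar0_def by (rule arg_cong[where f = Inf]) auto

lemma G0_Fbar0_inv:
  assumes G0: "cdf_with_density G0" and x: "0 < x" "x < 1"
  shows "G0 (Fbar0_inv G0 x) = 1 - x"
proof -
  let ?S = "{t. 1 - x \<le> G0 t}"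
  obtain a b where ab: "a \<le> b" "G0 a < 1 - x" "1 - x < G0 b" "\<And>t. t \<in> ?S \<Longrightarrow> a \<le> t"
    using cdf_with_density_level_bounds[OF G0, of "1 - x"] x by auto
  have cont: "continuous_on UNIV G0" using G0 by (simp add: cdf_with_density_def)
  obtain t0 where t0: "G0 t0 = 1 - x"
    using IVT'[of G0 a "1 - x" b] ab cont by (auto intro: continuous_on_subset)
  have "t0 \<in> ?S" using t0 by simp
  moreover have "bdd_below ?S" by (rule bdd_belowI[of _ a]) (use ab(4) in blast)
  moreover have "closed ?S" by (intro closed_Collect_le continuous_on_const cont)
  ultimately have "Inf ?S \<in> ?S" by (intro closed_contains_Inf) auto
  moreover have "G0 (Inf ?S) \<le> G0 t0"
    using \<open>t0 \<in> ?S\<close> \<open>bdd_below ?S\<close> by (intro monoD[OF cdf_with_density_mono[OF G0]] cInf_lower)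
  ultimately show ?thesis using t0 by (simp add: Fbar0_inv_eq_Inf)
qed

lemma Fbar0_inv_antimono:
  assumes G0: "cdf_with_density G0" and xy: "0 < x" "x \<le> y" "y < 1"
  shows "Fbar0_inv G0 y \<le> Fbar0_inv G0 x"
proof -
  obtain b where "1 - x < G0 b" using cdf_with_density_level_bounds[OF G0, of "1 - x"] xy by auto
  then have "b \<in> {t. 1 - x \<le> G0 t}" by simp
  then have nonempty: "{t. 1 - x \<le> G0 t} \<noteq> {}" by blast
  obtain a where a: "\<And>t. 1 - y \<le> G0 t \<Longrightarrow> a \<le> t"
    using cdf_with_density_level_bounds[OF G0, of "1 - y"] xy by auto
  have bounded: "bdd_below {t. 1 - y \<le> G0 t}" by (rule bdd_belowI[of _ a]) (use a in blast)
  show ?thesis unfolding Fbar0_inv_eq_Inf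
    by (rule cInf_superset_mono[OF nonempty bounded]) (use xy in auto)
qed

text \<open>The function \<open>D\<^sub>\<epsilon>\<close> of the pure alternative \<open>\<epsilon> = 1\<close>, extended by 0 and 1 outside \<open>(0, 1)\<close>
  so that it is monotone on the whole real line.\<close>

definition D_alt :: "(real \<Rightarrow> real) \<Rightarrow> (real \<Rightarrow> real) \<Rightarrow> real \<Rightarrow> real" where
  "D_alt G0 G1 x = (if x \<le> 0 then 0 else if 1 \<le> x then 1 else 1 - G1 (Fbar0_inv G0 x))"

lemma D_alt_mono:
  assumes G0: "cdf_with_density G0" and G1: "cdf_with_density G1"
  shows "mono (D_alt G0 G1)"
proof
  fix x y :: real assume xy: "x \<le> y"
  note G1_bounds = cdf_with_density_bounds[OF G1]
  show "D_alt G0 G1 x \<le> D_alt G0 G1 y"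
  proof (cases "x \<le> 0 \<or> 1 \<le> y")
    case True then show ?thesis using G1_bounds xy by (auto simp: D_alt_def)
  next
    case False
    then have "G1 (Fbar0_inv G0 y) \<le> G1 (Fbar0_inv G0 x)"
      using xy by (intro monoD[OF cdf_with_density_mono[OF G1]] Fbar0_inv_antimono[OF G0]) auto
    then show ?thesis using False xy by (auto simp: D_alt_def)
  qed
qed

lemma Dfun_eq_mixture:
  assumes "cdf_with_density G0" and "0 < x" "x < 1"
  shows "Dfun eps G0 G1 x = (1 - eps) * x + eps * D_alt G0 G1 x"
  using assms(2,3)
  by (simp add: Dfun_def Fbar1_def D_alt_def G0_Fbar0_inv[OF assms]) (simp add: algebra_simps)

lemma deriv_Dfun:
  assumes G0: "cdf_with_density G0" and u: "0 < u" "u < 1"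
    and diff: "D_alt G0 G1 differentiable (at u)"
  shows "deriv (Dfun eps G0 G1) u = (1 - eps) + eps * deriv (D_alt G0 G1) u"
proof -
  have D_alt: "(D_alt G0 G1 has_real_derivative deriv (D_alt G0 G1) u) (at u)"
    using diff DERIV_deriv_iff_real_differentiable by blast
  have "((\<lambda>x. (1 - eps) * x + eps * D_alt G0 G1 x) has_real_derivative
      (1 - eps) + eps * deriv (D_alt G0 G1) u) (at u)"
    using DERIV_add[OF DERIV_cmult[OF DERIV_ident] DERIV_cmult[OF D_alt]] by simp
  then have "(Dfun eps G0 G1 has_real_derivative (1 - eps) + eps * deriv (D_alt G0 G1) u) (at u)"
    by (rule has_field_derivative_transform_within_open[where S = "{0<..<1}"])
       (use u Dfun_eq_mixture[OF G0] in auto)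
  then show ?thesis by (rule DERIV_imp_deriv)
qed

lemma has_integral_neg_ln_E0:
  fixes t1 t2 :: real
  assumes t1: "0 < t1" and t2: "0 < t2"
  shows "((\<lambda>u. - ln (u / t2)) has_integral E0 t1 t2) {0..t1}"
proof -
  define F where "F u = u * (1 - ln (u / t2))" for u :: real
  have "((\<lambda>u. - ln (u / t2)) has_integral (F t1 - F 0)) {0..t1}"
  proof (rule fundamental_theorem_of_calculus_interior)
    have "(F \<longlongrightarrow> 0) (at_right 0)"
    proof -
      have "((\<lambda>u. u * (1 + ln t2) - u * ln u) \<longlongrightarrow> 0 * (1 + ln t2) - 0) (at_right 0)"
        by (intro tendsto_intros) real_asymp
      moreover have "\<forall>\<^sub>F u in at_right 0. u * (1 + ln t2) - u * ln u = F u"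
        using eventually_at_right_less[of "0::real"]
        by eventually_elim (use t2 in \<open>simp add: F_def ln_div algebra_simps\<close>)
      ultimately show ?thesis using tendsto_cong by force
    qed
    then have "continuous (at 0 within {0..t1}) F"
      using t1 by (simp add: continuous_within at_within_Icc_at_right F_def)
    moreover have "continuous (at x within {0..t1}) F" if "0 < x" for x
      unfolding F_def using that t2 by (intro continuous_intros) auto
    ultimately show "continuous_on {0..t1} F"
      unfolding continuous_on_eq_continuous_within by (metis atLeastAtMost_iff order_le_less)
    show "(F has_vector_derivative - ln (x / t2)) (at x)" if "x \<in> {0<..<t1}" for x
    proof -
      have "(F has_real_derivative (1 * (1 - ln (x / t2)) + x * (- (1 / t2 / (x / t2))))) (at x)"
        unfolding F_def using that t2 by (intro derivative_eq_intros) auto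
      then show ?thesis
        using that t2 by (simp add: has_real_derivative_iff_has_vector_derivative field_simps)
    qed
  qed (use t1 in simp)
  moreover have "F t1 - F 0 = E0 t1 t2" using t1 t2 by (simp add: F_def E0_def ln_div algebra_simps)
  ultimately show ?thesis by simp
qed

lemma integrable_neg_ln_weighted_iff:
  fixes h :: "real \<Rightarrow> real"
  assumes h: "h absolutely_integrable_on {0..1}" and t1: "0 < t1" "t1 \<le> 1" and t2: "0 < t2"
  shows "(\<lambda>u. - ln (u / t2) * h u) integrable_on {0..t1} \<longleftrightarrow> (\<lambda>u. ln u * h u) integrable_on {0..1}"
proof -
  have "h integrable_on {0..1}" using h by (simp add: absolutely_integrable_on_def)
  then have h_int: "h integrable_on {0..t1}" by (rule integrable_subinterval_real) (use t1 in simp)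
  have eq: "- ln (u / t2) * h u = ln t2 * h u - ln u * h u" if "u \<in> {0..t1} - {0}" for u
    using that t2 by (simp add: ln_div algebra_simps)
  have "(\<lambda>u. - ln (u / t2) * h u) integrable_on {0..t1} \<longleftrightarrow>
      (\<lambda>u. ln t2 * h u - ln u * h u) integrable_on {0..t1}"
  proof
    show "(\<lambda>u. ln t2 * h u - ln u * h u) integrable_on {0..t1}"
      if "(\<lambda>u. - ln (u / t2) * h u) integrable_on {0..t1}"
      by (rule integrable_spike[OF that negligible_sing[of 0]]) (use eq in simp)
    show "(\<lambda>u. - ln (u / t2) * h u) integrable_on {0..t1}"
      if "(\<lambda>u. ln t2 * h u - ln u * h u) integrable_on {0..t1}"
      by (rule integrable_spike[OF that negligible_sing[of 0]]) (use eq in simp)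
  qed
  also have "\<dots> \<longleftrightarrow> (\<lambda>u. ln u * h u) integrable_on {0..t1}"
  proof
    assume "(\<lambda>u. ln t2 * h u - ln u * h u) integrable_on {0..t1}"
    from integrable_diff[OF integrable_on_mult_right[OF h_int, of "ln t2"] this]
    show "(\<lambda>u. ln u * h u) integrable_on {0..t1}" by simp
  next
    assume "(\<lambda>u. ln u * h u) integrable_on {0..t1}"
    from integrable_diff[OF integrable_on_mult_right[OF h_int, of "ln t2"] this]
    show "(\<lambda>u. ln t2 * h u - ln u * h u) integrable_on {0..t1}" .
  qed
  also have "\<dots> \<longleftrightarrow> (\<lambda>u. ln u * h u) integrable_on {0..1}"
  proof
    have "(\<lambda>u. ln u * h u) absolutely_integrable_on {t1..1}"
    proof (rule absolutely_integrable_bounded_measurable_product_real)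
      have ln: "continuous_on {t1..1} ln" using t1 by (intro continuous_intros) auto
      show "ln \<in> borel_measurable (lebesgue_on {t1..1})"
        by (rule continuous_imp_measurable_on_sets_lebesgue[OF ln]) simp
      show "bounded (ln ` {t1..1})"
        by (rule compact_imp_bounded[OF compact_continuous_image[OF ln compact_Icc]])
      show "h absolutely_integrable_on {t1..1}"
        by (rule absolutely_integrable_on_subinterval[OF h]) (use t1 in auto)
    qed simp
    then have "(\<lambda>u. ln u * h u) integrable_on {t1..1}" by (simp add: absolutely_integrable_on_def)
    moreover assume "(\<lambda>u. ln u * h u) integrable_on {0..t1}"
    ultimately show "(\<lambda>u. ln u * h u) integrable_on {0..1}"
      using Henstock_Kurzweil_Integration.integrable_combine[of 0 t1 1] t1 by simp
  qed (rule integrable_subinterval_real, use t1 in auto)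
  finally show ?thesis .
qed

lemma E1_eq:
  fixes G0 G1 :: "real \<Rightarrow> real"
  assumes G0: "cdf_with_density G0" and G1: "cdf_with_density G1" and eps: "0 < eps"
    and t1: "0 < t1" "t1 \<le> 1" and t2: "0 < t2"
  defines "h \<equiv> deriv (D_alt G0 G1)"
  shows "E1 eps G0 G1 t1 t2 =
    (if (\<lambda>u. ln u * h u) integrable_on {0..1}
     then (1 - eps) * E0 t1 t2 + eps * integral {0..t1} (\<lambda>u. - ln (u / t2) * h u) else 0)"
proof -
  define Z where "Z = {x. \<not> D_alt G0 G1 differentiable (at x)} \<union> {0, 1}"
  have Z: "negligible Z"
    unfolding Z_def using mono_differentiable_ae[OF D_alt_mono[OF G0 G1]] by (intro negligible_Un) auto
  define J where "J = (\<lambda>u. (1 - eps) * - ln (u / t2) + eps * (- ln (u / t2) * h u))"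
  have "- ln (u / t2) * deriv (Dfun eps G0 G1) u = J u" if "u \<in> {0..t1} - Z" for u
  proof -
    have d: "deriv (Dfun eps G0 G1) u = (1 - eps) + eps * h u"
      using that t1 deriv_Dfun[OF G0, of u G1 eps] by (simp add: Z_def h_def)
    show ?thesis unfolding J_def d by (simp add: algebra_simps)
  qed
  then have E1_J: "E1 eps G0 G1 t1 t2 = integral {0..t1} J"
    unfolding E1_def by (rule integral_spike[OF Z, symmetric])
  have log: "((\<lambda>u. - ln (u / t2)) has_integral E0 t1 t2) {0..t1}"
    by (rule has_integral_neg_ln_E0[OF t1(1) t2])
  have A: "(\<lambda>u. (1 - eps) * - ln (u / t2)) integrable_on {0..t1}"
    using has_integral_integrable[OF log] by (rule integrable_on_mult_right)
  have "J integrable_on {0..t1} \<longleftrightarrow> (\<lambda>u. eps * (- ln (u / t2) * h u)) integrable_on {0..t1}"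
  proof
    assume "J integrable_on {0..t1}"
    from integrable_diff[OF this A]
    show "(\<lambda>u. eps * (- ln (u / t2) * h u)) integrable_on {0..t1}" by (simp add: J_def)
  next
    assume "(\<lambda>u. eps * (- ln (u / t2) * h u)) integrable_on {0..t1}"
    from integrable_add[OF A this] show "J integrable_on {0..t1}" by (simp add: J_def)
  qed
  also have "\<dots> \<longleftrightarrow> (\<lambda>u. - ln (u / t2) * h u) integrable_on {0..t1}"
    by (rule integrable_on_cmult_iff) (use eps in simp)
  finally have J_iff: "J integrable_on {0..t1} \<longleftrightarrow> (\<lambda>u. - ln (u / t2) * h u) integrable_on {0..t1}" .
  have weighted_iff:
    "(\<lambda>u. - ln (u / t2) * h u) integrable_on {0..t1} \<longleftrightarrow> (\<lambda>u. ln u * h u) integrable_on {0..1}"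
    unfolding h_def
    by (rule integrable_neg_ln_weighted_iff[OF mono_deriv_absolutely_integrable[OF D_alt_mono[OF G0 G1]] t1 t2])
  show ?thesis
  proof (cases "(\<lambda>u. ln u * h u) integrable_on {0..1}")
    case True
    then have "(\<lambda>u. - ln (u / t2) * h u) integrable_on {0..t1}" using weighted_iff by simp
    from has_integral_add[OF has_integral_mult_right[OF log] has_integral_mult_right[OF integrable_integral[OF this]]]
    have "(J has_integral (1 - eps) * E0 t1 t2 + eps * integral {0..t1} (\<lambda>u. - ln (u / t2) * h u)) {0..t1}"
      by (simp add: J_def)
    then show ?thesis using True E1_J by (simp add: integral_unique)
  next
    case False
    then show ?thesis using J_iff weighted_iff E1_J by (simp add: not_integrable_integral)
  qed
qed

lemma c_eff_proportional:
  fixes G0 G1 :: "real \<Rightarrow> real"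
  assumes G0: "cdf_with_density G0" and G1: "cdf_with_density G1"
    and eps: "0 < eps" and eps': "0 < eps'"
  obtains \<kappa> where "0 < \<kappa>"
    "\<And>t1 t2. 0 < t1 \<Longrightarrow> t1 \<le> 1 \<Longrightarrow> 0 < t2 \<Longrightarrow> c_eff eps' G0 G1 t1 t2 = \<kappa> * c_eff eps G0 G1 t1 t2"
proof
  define P where "P \<longleftrightarrow> (\<lambda>u. ln u * deriv (D_alt G0 G1) u) integrable_on {0..1}"
  define B where "B t1 t2 = integral {0..t1} (\<lambda>u. - ln (u / t2) * deriv (D_alt G0 G1) u)" for t1 t2
  have diff: "E1 e G0 G1 t1 t2 - E0 t1 t2 = (if P then e * (B t1 t2 - E0 t1 t2) else - E0 t1 t2)"
    if "0 < e" "0 < t1" "t1 \<le> 1" "0 < t2" for e t1 t2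
    using E1_eq[OF G0 G1 that] by (simp add: P_def B_def algebra_simps)
  show "0 < (if P then (eps' / eps)\<^sup>2 else 1)" using eps eps' by simp
  show "c_eff eps' G0 G1 t1 t2 = (if P then (eps' / eps)\<^sup>2 else 1) * c_eff eps G0 G1 t1 t2"
    if "0 < t1" "t1 \<le> 1" "0 < t2" for t1 t2
    using diff[OF eps that] diff[OF eps' that] eps
    by (simp add: c_eff_def power_mult_distrib power_divide)
qed

lemma maximizers_eq_if_proportional:
  assumes "0 < \<kappa>"
    and "\<And>t1 t2. 0 < t1 \<Longrightarrow> t1 \<le> 1 \<Longrightarrow> 0 < t2 \<Longrightarrow> c_eff eps' G0 G1 t1 t2 = \<kappa> * c_eff eps G0 G1 t1 t2"
  shows "maximizers eps' G0 G1 = maximizers eps G0 G1"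
  using assms unfolding maximizers_def by auto

theorem lemma2:
  fixes G0 G1 :: "real \<Rightarrow> real" and eps eps' :: real
  assumes "cdf_with_density G0" and "cdf_with_density G1"
    and "0 < eps" and "eps < 1" and "0 < eps'" and "eps' < 1"
  shows "maximizers eps G0 G1 = maximizers eps' G0 G1"
proof -
  obtain \<kappa> where "0 < \<kappa>"
    "\<And>t1 t2. 0 < t1 \<Longrightarrow> t1 \<le> 1 \<Longrightarrow> 0 < t2 \<Longrightarrow> c_eff eps' G0 G1 t1 t2 = \<kappa> * c_eff eps G0 G1 t1 t2"
    using c_eff_proportional[OF assms(1,2,3,5)] by metis
  then show ?thesis by (rule maximizers_eq_if_proportional[symmetric])
qed

end
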